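(* Let $n$ be even. For $i=1,2$ let $E_i=\{e^{(i)}_0,\dots,e^{(i)}_{2^{\lambda_i}-1}\}\subset\mathbb F_2^n$ be a linear subspace of dimension $\lambda_i$, listed in lexicographic order (so $e^{(i)}_0=\mathbf 0_n$), let $v_i\in\mathbb F_2^n$, and let $S^{[i]}=v_i\oplus E_i=\{\omega^{(i)}_j=v_i\oplus e^{(i)}_j\}$, where $S^{[1]}\cap S^{[2]}=\emptyset$ and $2^{\lambda_1}+2^{\lambda_2}<2^n$. Let $f^*_{[i]}:S^{[i]}\to\mathbb F_2$, and regard $f^*_{[i]}$ also as a function on $\mathbb F_2^{\lambda_i}$ via $f^*_{[i]}(x_j):=f^*_{[i]}(\omega^{(i)}_j)$, where $\mathbb F_2^{\lambda_i}=\{x_0,\dots,x_{2^{\lambda_i}-1}\}$ is in lexicographic order. Suppose that, as functions on $\mathbb F_2^{\lambda_i}$, $f^*_{[i]}$ is $s_i$-plateaued ($i=1,2$), and that $f^*_{[1]},f^*_{[2]}$ are totally disjoint spectra functions (as functions on $S^{[1]},S^{[2]}$). Define $W:\mathbb F_2^n\to\mathbb Z$ by $W(u)=0$ for $u\notin S^{[1]}\cup S^{[2]}$, $W(u)=(-1)^{f^*_{[1]}(u)}2^{(n+2)/2}$ for $u\in S^{[1]}$, $W(u)=(-1)^{f^*_{[2]}(u)}2^{n/2}$ for $u\in S^{[2]}$. Then $W$ is the Walsh spectrum of a Boolean function $f:\mathbb F_2^n\to\mathbb F_2$ (which then has $W_f(u)\in\{0,\pm2^{n/2},\pm2^{(n+2)/2}\}$)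 if and only if $\lambda_1+s_1+2=\lambda_2+s_2=n$.
   Context: $W_f(\omega)=\sum_{x}(-1)^{f(x)\oplus\omega\cdot x}$. A function $g:\mathbb F_2^\lambda\to\mathbb F_2$ is $s$-plateaued if $W_g(\omega)\in\{0,\pm2^{(\lambda+s)/2}\}$ for all $\omega$. Lexicographic order: $e$ precedes $e'$ iff the integer with binary expansion $e$ (first coordinate most significant) is smaller. Totally disjoint spectra functions: for disjoint $S^{[1]},S^{[2]}\subset\mathbb F_2^n$ and functions $f^*_{[i]}:S^{[i]}\to\mathbb F_2$, put $X_i(u)=\sum_{\omega\in S^{[i]}}(-1)^{f^*_{[i]}(\omega)\oplus u\cdot\omega}$; the pair is totally disjoint spectra if $X_1(u)X_2(u)=0$ and $|X_1(u)|+|X_2(u)|>0$ for all $u\in\mathbb F_2^n$. *)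

theory Defs
  imports Complex_Main
begin

text \<open>Vectors of F_2^n are boolean lists of length n; True = 1, first coordinate first.\<close>

definition vecs :: "nat \<Rightarrow> bool list set" where
  "vecs n = {xs. length xs = n}"

definition zerov :: "nat \<Rightarrow> bool list" where
  "zerov n = replicate n False"

definition vxor :: "bool list \<Rightarrow> bool list \<Rightarrow> bool list" where
  "vxor u v = map2 (\<noteq>) u v"

definition dotp :: "bool list \<Rightarrow> bool list \<Rightarrow> bool" where
  "dotp u x = odd (card {i. i < length u \<and> i < length x \<and> u ! i \<and> x ! i})"

definition sgn1 :: "bool \<Rightarrow> int" where
  "sgn1 b = (if b then -1 else 1)"

definition walsh :: "nat \<Rightarrow> (bool list \<Rightarrow> bool) \<Rightarrow> bool list \<Rightarrow> int" where
  "walsh m g w = (\<Sum>x\<in>vecs m. sgn1 (g x \<noteq> dotp w x))"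

definition plateaued :: "nat \<Rightarrow> nat \<Rightarrow> (bool list \<Rightarrow> bool) \<Rightarrow> bool" where
  "plateaued m s g \<longleftrightarrow> (\<forall>w\<in>vecs m.
     real_of_int (walsh m g w) \<in> {0, 2 powr ((real m + real s) / 2), - (2 powr ((real m + real s) / 2))})"

text \<open>Linear subspace of F_2^n and its dimension (over F_2, dim E = k iff |E| = 2^k).\<close>
definition lin_subspace :: "nat \<Rightarrow> bool list set \<Rightarrow> bool" where
  "lin_subspace n E \<longleftrightarrow> E \<subseteq> vecs n \<and> zerov n \<in> E \<and> (\<forall>a\<in>E. \<forall>b\<in>E. vxor a b \<in> E)"

definition subspace_dim :: "nat \<Rightarrow> bool list set \<Rightarrow> nat \<Rightarrow> bool" where
  "subspace_dim n E k \<longleftrightarrow> lin_subspace n E \<and> card E = 2 ^ k"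

text \<open>Integer with binary expansion xs, first coordinate most significant.\<close>
definition bv_val :: "bool list \<Rightarrow> nat" where
  "bv_val xs = foldl (\<lambda>a b. 2 * a + (if b then 1 else 0)) 0 xs"

text \<open>The j-th element (0-based) of E in lexicographic order.\<close>
definition lex_enum :: "bool list set \<Rightarrow> nat \<Rightarrow> bool list" where
  "lex_enum E j = (THE e. e \<in> E \<and> card {e'\<in>E. bv_val e' < bv_val e} = j)"

text \<open>f on the coset v + E regarded as a function on F_2^k:
  x_j (the j-th vector of F_2^k in lexicographic order, i.e. bv_val x_j = j) is sent to
  f(v + e_j).\<close>
definition coset_transfer :: "bool list \<Rightarrow> bool list set \<Rightarrow> (bool list \<Rightarrow> bool) \<Rightarrow> bool list \<Rightarrow> bool" where
  "coset_transfer v E f x = f (vxor v (lex_enum E (bv_val x)))"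

definition Xsum :: "bool list set \<Rightarrow> (bool list \<Rightarrow> bool) \<Rightarrow> bool list \<Rightarrow> int" where
  "Xsum S f u = (\<Sum>w\<in>S. sgn1 (f w \<noteq> dotp u w))"

definition totally_disjoint_spectra ::
  "nat \<Rightarrow> bool list set \<Rightarrow> (bool list \<Rightarrow> bool) \<Rightarrow> bool list set \<Rightarrow> (bool list \<Rightarrow> bool) \<Rightarrow> bool" where
  "totally_disjoint_spectra n S1 f1 S2 f2 \<longleftrightarrow>
     (\<forall>u\<in>vecs n. Xsum S1 f1 u * Xsum S2 f2 u = 0 \<and> \<bar>Xsum S1 f1 u\<bar> + \<bar>Xsum S2 f2 u\<bar> > 0)"

end

theory Submission
  imports Defs
begin

text \<open>
  By Walsh inversion, W is a Walsh spectrum iff its inverse transform has modulus 2^n everywhere.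
  On the two disjoint cosets this inverse transform is 2^((n+2)/2) X_1(u) + 2^(n/2) X_2(u).
  The lexicographic enumeration of a subspace is linear, so X_i(u) is, up to sign, a Walsh value
  of the transferred plateaued function, whence |X_i(u)| is 0 or 2^((lambda_i + s_i)/2).
  Total disjointness makes exactly one of X_1(u), X_2(u) nonzero at each u, and neither vanishes
  identically, so the modulus condition splits into the two exponent equations.
\<close>

section \<open>Vectors over GF(2) and character sums\<close>

lemma abs_sgn1 [simp]: "\<bar>sgn1 b\<bar> = 1"
  by (simp add: sgn1_def)

lemma dotp_Nil1 [simp]: "dotp [] x = False"
  by (simp add: dotp_def)

lemma dotp_Nil2 [simp]: "dotp u [] = False"
  by (simp add: dotp_def)

lemma dotp_Cons [simp]: "dotp (a # u) (b # x) = ((a \<and> b) \<noteq> dotp u x)"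
proof -
  let ?S = "{i. i < length u \<and> i < length x \<and> u ! i \<and> x ! i}"
  have "{i. i < length (a # u) \<and> i < length (b # x) \<and> (a # u) ! i \<and> (b # x) ! i}
      = (if a \<and> b then {0} else {}) \<union> Suc ` ?S"
  proof (rule set_eqI)
    show "i \<in> {i. i < length (a # u) \<and> i < length (b # x) \<and> (a # u) ! i \<and> (b # x) ! i} \<longleftrightarrow>
        i \<in> (if a \<and> b then {0} else {}) \<union> Suc ` ?S" for i
      by (cases i) auto
  qed
  moreover have "card ((if a \<and> b then {0} else {}) \<union> Suc ` ?S) = (if a \<and> b then 1 else 0) + card ?S"
    by (auto simp: card_image)
  ultimately show ?thesis
    unfolding dotp_def by auto
qed

lemma dotp_commute: "dotp u x = dotp x u"
  unfolding dotp_def by (metis (no_types, lifting) Collect_cong)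

lemma dotp_zerov [simp]: "dotp x (zerov n) = False"
proof (induction x arbitrary: n)
  case (Cons a x)
  then show ?case
    by (cases n) (simp_all add: zerov_def)
qed simp

lemma vxor_Nil1 [simp]: "vxor [] v = []"
  by (simp add: vxor_def)

lemma vxor_Nil2 [simp]: "vxor u [] = []"
  by (simp add: vxor_def)

lemma vxor_Cons [simp]: "vxor (a # u) (b # v) = (a \<noteq> b) # vxor u v"
  by (simp add: vxor_def)

lemma length_vxor [simp]: "length (vxor u v) = min (length u) (length v)"
  by (simp add: vxor_def)

lemma nth_vxor: "i < length u \<Longrightarrow> i < length v \<Longrightarrow> vxor u v ! i = (u ! i \<noteq> v ! i)"
  by (simp add: vxor_def)

lemma vxor_cancel_left: "length u = length v \<Longrightarrow> vxor u (vxor u v) = v"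
  by (induction u arbitrary: v) (auto simp: Suc_length_conv)

lemma vxor_zerov: "length u = n \<Longrightarrow> vxor u (zerov n) = u"
  by (induction u arbitrary: n) (auto simp: zerov_def)

lemma vxor_eq_zerov_iff:
  "length u = n \<Longrightarrow> length v = n \<Longrightarrow> vxor u v = zerov n \<longleftrightarrow> u = v"
  by (induction u arbitrary: n v) (auto simp: zerov_def length_Suc_conv)

lemma dotp_vxor: "length u = length v \<Longrightarrow> dotp x (vxor u v) = (dotp x u \<noteq> dotp x v)"
proof (induction u arbitrary: v x)
  case (Cons a u)
  then show ?case
    by (cases v; cases x) auto
qed simp

lemma inj_on_vxor: "v \<in> vecs n \<Longrightarrow> inj_on (vxor v) (vecs n)"
  by (rule inj_on_inverseI[where g = "vxor v"]) (auto simp: vecs_def vxor_cancel_left)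

lemma vecs_Suc: "vecs (Suc n) = Cons False ` vecs n \<union> Cons True ` vecs n"
  by (auto simp: vecs_def length_Suc_conv image_def)

lemma finite_vecs [simp]: "finite (vecs n)"
  using finite_lists_length_eq[of "UNIV :: bool set" n] by (simp add: vecs_def)

lemma finite_subset_vecs: "E \<subseteq> vecs n \<Longrightarrow> finite E"
  using finite_subset finite_vecs by blast

lemma card_vecs: "card (vecs n) = 2 ^ n"
  using card_lists_length_eq[of "UNIV :: bool set" n] by (simp add: vecs_def)

lemma sum_vecs_Suc:
  "(\<Sum>x\<in>vecs (Suc n). F x) = (\<Sum>x\<in>vecs n. F (False # x) + F (True # x))"
proof -
  have "(\<Sum>x\<in>vecs (Suc n). F x) = (\<Sum>x\<in>Cons False ` vecs n. F x) + (\<Sum>x\<in>Cons True ` vecs n. F x)"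
    unfolding vecs_Suc by (rule sum.union_disjoint) auto
  also have "\<dots> = (\<Sum>x\<in>vecs n. F (False # x)) + (\<Sum>x\<in>vecs n. F (True # x))"
    by (simp add: sum.reindex)
  finally show ?thesis
    by (simp add: sum.distrib)
qed

lemma sum_sgn1_dotp:
  "z \<in> vecs n \<Longrightarrow> (\<Sum>x\<in>vecs n. sgn1 (dotp x z)) = (if z = zerov n then 2 ^ n else 0)"
proof (induction n arbitrary: z)
  case 0
  then show ?case
    by (simp add: vecs_def zerov_def sgn1_def)
next
  case (Suc n)
  then obtain c z' where z: "z = c # z'" "z' \<in> vecs n"
    by (auto simp: vecs_def length_Suc_conv)
  have "(\<Sum>x\<in>vecs (Suc n). sgn1 (dotp x z)) = (\<Sum>x\<in>vecs n. (1 + sgn1 c) * sgn1 (dotp x z'))"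
    unfolding sum_vecs_Suc z by (intro sum.cong) (auto simp: sgn1_def)
  also have "\<dots> = (1 + sgn1 c) * (if z' = zerov n then 2 ^ n else 0)"
    by (simp add: sum_distrib_left[symmetric] Suc.IH z)
  finally show ?case
    by (cases c) (auto simp: z zerov_def sgn1_def)
qed

lemma sum_sgn1_dotp_mult:
  assumes "w \<in> vecs n" "v \<in> vecs n"
  shows "(\<Sum>x\<in>vecs n. sgn1 (dotp x w) * sgn1 (dotp x v)) = (if w = v then 2 ^ n else 0)"
proof -
  have "(\<Sum>x\<in>vecs n. sgn1 (dotp x w) * sgn1 (dotp x v)) = (\<Sum>x\<in>vecs n. sgn1 (dotp x (vxor w v)))"
    using assms by (intro sum.cong) (auto simp: dotp_vxor vecs_def sgn1_def)
  also have "\<dots> = (if w = v then 2 ^ n else 0)"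
    using assms by (subst sum_sgn1_dotp) (auto simp: vecs_def vxor_eq_zerov_iff)
  finally show ?thesis .
qed

lemma sum_sgn1_dotp_transform_twice:
  assumes "x \<in> vecs n"
  shows "(\<Sum>u\<in>vecs n. (\<Sum>y\<in>vecs n. g y * sgn1 (dotp u y)) * sgn1 (dotp u x)) = 2 ^ n * (g x :: int)"
proof -
  have "(\<Sum>u\<in>vecs n. (\<Sum>y\<in>vecs n. g y * sgn1 (dotp u y)) * sgn1 (dotp u x))
      = (\<Sum>u\<in>vecs n. \<Sum>y\<in>vecs n. g y * (sgn1 (dotp u y) * sgn1 (dotp u x)))"
    by (simp add: sum_distrib_right mult.assoc)
  also have "\<dots> = (\<Sum>y\<in>vecs n. g y * (\<Sum>u\<in>vecs n. sgn1 (dotp u y) * sgn1 (dotp u x)))"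
    by (subst sum.swap) (simp add: sum_distrib_left)
  also have "\<dots> = (\<Sum>y\<in>vecs n. g y * (if y = x then 2 ^ n else 0))"
    by (intro sum.cong refl) (simp add: sum_sgn1_dotp_mult assms)
  also have "\<dots> = 2 ^ n * g x"
    using assms by (simp add: if_distrib sum.delta cong: if_cong)
  finally show ?thesis .
qed

section \<open>Walsh inversion\<close>

lemma walsh_eq_sum: "walsh n f u = (\<Sum>y\<in>vecs n. sgn1 (f y) * sgn1 (dotp u y))"
  unfolding walsh_def by (intro sum.cong) (auto simp: sgn1_def)

text \<open>The Boolean function is read off from the signs of the inverse transform.\<close>
lemma walsh_spectrum_iff:
  "(\<exists>f. \<forall>u\<in>vecs n. walsh n f u = W u) \<longleftrightarrow>
   (\<forall>x\<in>vecs n. \<bar>\<Sum>u\<in>vecs n. W u * sgn1 (dotp u x)\<bar> = 2 ^ n)"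
proof
  assume "\<exists>f. \<forall>u\<in>vecs n. walsh n f u = W u"
  then obtain f where f: "\<forall>u\<in>vecs n. walsh n f u = W u"
    by blast
  show "\<forall>x\<in>vecs n. \<bar>\<Sum>u\<in>vecs n. W u * sgn1 (dotp u x)\<bar> = 2 ^ n"
  proof
    fix x assume x: "x \<in> vecs n"
    have "(\<Sum>u\<in>vecs n. W u * sgn1 (dotp u x)) = (\<Sum>u\<in>vecs n. walsh n f u * sgn1 (dotp u x))"
      using f by simp
    also have "\<dots> = 2 ^ n * sgn1 (f x)"
      unfolding walsh_eq_sum by (rule sum_sgn1_dotp_transform_twice[OF x])
    finally show "\<bar>\<Sum>u\<in>vecs n. W u * sgn1 (dotp u x)\<bar> = 2 ^ n"
      by (simp add: abs_mult)
  qed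
next
  assume inv: "\<forall>x\<in>vecs n. \<bar>\<Sum>u\<in>vecs n. W u * sgn1 (dotp u x)\<bar> = 2 ^ n"
  define G where "G x = (\<Sum>u\<in>vecs n. W u * sgn1 (dotp x u))" for x
  define f where "f x = (G x < 0)" for x
  have G: "G x = 2 ^ n * sgn1 (f x)" if "x \<in> vecs n" for x
    using inv that by (auto simp: G_def f_def sgn1_def abs_if dotp_commute)
  have "walsh n f w = W w" if w: "w \<in> vecs n" for w
  proof -
    have "2 ^ n * walsh n f w = (\<Sum>y\<in>vecs n. G y * sgn1 (dotp y w))"
      unfolding walsh_eq_sum using G by (simp add: sum_distrib_left mult.assoc dotp_commute)
    also have "\<dots> = 2 ^ n * W w"
      unfolding G_def by (rule sum_sgn1_dotp_transform_twice[OF w])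
    finally show ?thesis
      by simp
  qed
  then show "\<exists>f. \<forall>u\<in>vecs n. walsh n f u = W u"
    by blast
qed

section \<open>Lexicographic order and enumeration\<close>

lemma bv_val_Nil [simp]: "bv_val [] = 0"
  by (simp add: bv_val_def)

lemma bv_val_Cons [simp]: "bv_val (b # xs) = (if b then 2 ^ length xs else 0) + bv_val xs"
proof -
  have foldl_shift: "foldl (\<lambda>a b. 2 * a + (if b then 1 else 0)) (a :: nat) ys
      = a * 2 ^ length ys + foldl (\<lambda>a b. 2 * a + (if b then 1 else 0)) 0 ys" for a ys
  proof (induction ys arbitrary: a)
    case (Cons y ys)
    show ?case
      using Cons.IH[of "2 * a + (if y then 1 else 0)"] Cons.IH[of "if y then 1 else 0"]
      by (simp add: algebra_simps)
  qed simp
  show ?thesis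
    unfolding bv_val_def by (subst foldl_Cons, subst foldl_shift) simp
qed

lemma bv_val_less: "bv_val xs < 2 ^ length xs"
  by (induction xs) auto

lemma bv_val_Cons_less_iff:
  "length u = length v \<Longrightarrow> bv_val (a # u) < bv_val (b # v) \<longleftrightarrow> \<not> a \<and> b \<or> a = b \<and> bv_val u < bv_val v"
  using bv_val_less[of u] bv_val_less[of v] by auto

lemma bv_val_less_iff_first_diff:
  assumes "length u = length v" "p < length u" "\<forall>i<p. u ! i = v ! i" "u ! p \<noteq> v ! p"
  shows "bv_val u < bv_val v \<longleftrightarrow> v ! p"
  using assms
proof (induction u arbitrary: v p)
  case (Cons a u)
  then obtain b v' where v: "v = b # v'" and lv: "length u = length v'"
    by (cases v) auto
  show ?case
  proof (cases p)
    case 0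
    then show ?thesis
      using Cons.prems v lv bv_val_Cons_less_iff by auto
  next
    case (Suc q)
    have "a = b"
      using Cons.prems(3) v Suc by fastforce
    moreover have "\<forall>i<q. u ! i = v' ! i"
      using Cons.prems(3) v Suc by fastforce
    ultimately show ?thesis
      using Cons.IH[OF lv, of q] Cons.prems v Suc lv bv_val_Cons_less_iff by auto
  qed
qed simp

lemma exists_first_diff:
  "length u = length v \<Longrightarrow> u \<noteq> v \<Longrightarrow> \<exists>p < length u. (\<forall>i<p. u ! i = v ! i) \<and> u ! p \<noteq> v ! p"
proof (induction u arbitrary: v)
  case (Cons a u)
  then obtain b v' where v: "v = b # v'" and lv: "length u = length v'"
    by (cases v) auto
  show ?case
  proof (cases "a = b")
    case True
    with Cons.prems v have "u \<noteq> v'"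
      by simp
    with Cons.IH[OF lv] obtain p where p: "p < length u" "\<forall>i<p. u ! i = v' ! i" "u ! p \<noteq> v' ! p"
      by blast
    have "\<forall>i<Suc p. (a # u) ! i = (b # v') ! i"
      using p(2) True by (auto simp: less_Suc_eq_0_disj)
    with p True v show ?thesis
      by (intro exI[of _ "Suc p"]) simp
  next
    case False
    with v show ?thesis
      by (intro exI[of _ 0]) simp
  qed
qed simp

lemma inj_on_bv_val: "E \<subseteq> vecs n \<Longrightarrow> inj_on bv_val E"
proof (rule inj_on_subset[of _ "vecs n"])
  have "u = v" if "length u = length v" "bv_val u = bv_val v" for u v
    using that
  proof (induction u arbitrary: v)
    case (Cons a u)
    then obtain b v' where v: "v = b # v'" and lv: "length u = length v'"
      by (cases v) auto
    with Cons.prems have "a = b" and "bv_val u = bv_val v'"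
      using bv_val_less[of u] bv_val_less[of v'] by (auto split: if_splits)
    with Cons.IH lv v show ?case
      by simp
  qed simp
  then show "inj_on bv_val (vecs n)"
    by (auto simp: vecs_def intro: inj_onI)
qed

lemma bv_val_image_vecs: "bv_val ` vecs n = {..<2 ^ n}"
proof (rule card_subset_eq)
  show "bv_val ` vecs n \<subseteq> {..<2 ^ n}"
    using bv_val_less by (auto simp: vecs_def)
  show "card (bv_val ` vecs n) = card {..<2 ^ n :: nat}"
    using inj_on_bv_val[of "vecs n" n] by (simp add: card_image card_vecs)
qed simp

definition lex_rank :: "bool list set \<Rightarrow> bool list \<Rightarrow> nat" where
  "lex_rank E e = card {e' \<in> E. bv_val e' < bv_val e}"

lemma lex_rank_strict_mono:
  assumes "finite E" "e1 \<in> E" "bv_val e1 < bv_val e2"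
  shows "lex_rank E e1 < lex_rank E e2"
  unfolding lex_rank_def
proof (rule psubset_card_mono)
  show "{e' \<in> E. bv_val e' < bv_val e1} \<subset> {e' \<in> E. bv_val e' < bv_val e2}"
    using assms(2,3) by auto
qed (use assms(1) in simp)

lemma lex_rank_less_card: "finite E \<Longrightarrow> e \<in> E \<Longrightarrow> lex_rank E e < card E"
  unfolding lex_rank_def by (rule psubset_card_mono) auto

lemma lex_rank_inj:
  assumes "finite E" "inj_on bv_val E" "e1 \<in> E" "e2 \<in> E" "lex_rank E e1 = lex_rank E e2"
  shows "e1 = e2"
proof (rule ccontr)
  assume "e1 \<noteq> e2"
  then have "bv_val e1 \<noteq> bv_val e2"
    using assms(2-4) by (simp add: inj_on_eq_iff)
  then show False
    using lex_rank_strict_mono[OF assms(1,3), of e2] lex_rank_strict_mono[OF assms(1,4), of e1] assms(5)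
    by linarith
qed

lemma lex_rank_image:
  assumes "finite E" "inj_on bv_val E"
  shows "lex_rank E ` E = {..<card E}"
proof (rule card_subset_eq)
  have "inj_on (lex_rank E) E"
    using lex_rank_inj[OF assms] by (simp add: inj_on_def)
  then show "card (lex_rank E ` E) = card {..<card E}"
    by (simp add: card_image)
qed (use lex_rank_less_card[OF assms(1)] in auto)

lemma lex_enum_eqI:
  assumes "finite E" "inj_on bv_val E" "e \<in> E" "lex_rank E e = j"
  shows "lex_enum E j = e"
proof -
  have "(THE e. e \<in> E \<and> lex_rank E e = j) = e"
    using assms lex_rank_inj[OF assms(1,2)] by (intro the_equality) auto
  then show ?thesis
    by (simp add: lex_enum_def lex_rank_def)
qed

lemma lex_enum_mem:
  assumes "finite E" "inj_on bv_val E" "j < card E"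
  shows "lex_enum E j \<in> E" "lex_rank E (lex_enum E j) = j"
proof -
  obtain e where "e \<in> E" "lex_rank E e = j"
    using lex_rank_image[OF assms(1,2)] assms(3) by (metis imageE lessThan_iff)
  then show "lex_enum E j \<in> E" "lex_rank E (lex_enum E j) = j"
    using lex_enum_eqI[OF assms(1,2)] by simp_all
qed

lemma bij_betw_lex_enum:
  assumes "E \<subseteq> vecs n" "card E = 2 ^ k"
  shows "bij_betw (\<lambda>y. lex_enum E (bv_val y)) (vecs k) E"
proof -
  have fin: "finite E" and inj: "inj_on bv_val E"
    using finite_subset_vecs[OF assms(1)] inj_on_bv_val[OF assms(1)] by simp_all
  have "bij_betw (lex_enum E) {..<card E} E"
  proof (rule bij_betw_byWitness[where f' = "lex_rank E"])
    show "\<forall>e\<in>E. lex_enum E (lex_rank E e) = e"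
      using lex_enum_eqI[OF fin inj _ refl] by simp
    show "\<forall>j\<in>{..<card E}. lex_rank E (lex_enum E j) = j" "lex_enum E ` {..<card E} \<subseteq> E"
      using lex_enum_mem[OF fin inj] by auto
    show "lex_rank E ` E \<subseteq> {..<card E}"
      using lex_rank_image[OF fin inj] by simp
  qed
  moreover have "bij_betw bv_val (vecs k) {..<card E}"
    using inj_on_bv_val[of "vecs k" k] bv_val_image_vecs assms(2) by (simp add: bij_betw_def)
  ultimately show ?thesis
    using bij_betw_trans[of bv_val "vecs k" "{..<card E}" "lex_enum E" E] by (simp add: comp_def)
qed

lemma lex_enum_image:
  assumes fin: "finite E" and inj: "inj_on bv_val E"
    and mono: "\<And>a b. a \<in> E \<Longrightarrow> b \<in> E \<Longrightarrow> bv_val a < bv_val b \<Longrightarrow> bv_val (g a) < bv_val (g b)"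
    and j: "j < card E"
  shows "lex_enum (g ` E) j = g (lex_enum E j)"
proof -
  have mono_iff: "bv_val (g a) < bv_val (g b) \<longleftrightarrow> bv_val a < bv_val b" if "a \<in> E" "b \<in> E" for a b
  proof
    assume less: "bv_val (g a) < bv_val (g b)"
    show "bv_val a < bv_val b"
    proof (rule ccontr)
      assume "\<not> bv_val a < bv_val b"
      then have "bv_val b < bv_val a \<or> a = b"
        using inj that by (auto simp: inj_on_eq_iff[symmetric])
      then show False
        using mono[OF that(2,1)] less by auto
    qed
  qed (rule mono[OF that])
  have bv_val_g_eq: "bv_val (g a) = bv_val (g b) \<longleftrightarrow> a = b" if "a \<in> E" "b \<in> E" for a b
    using mono_iff[OF that] mono_iff[OF that(2,1)] inj_on_eq_iff[OF inj that] by auto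
  have inj_g: "inj_on g E"
    unfolding inj_on_def using bv_val_g_eq by metis
  have inj_image: "inj_on bv_val (g ` E)"
    unfolding inj_on_def using bv_val_g_eq by auto
  let ?e = "lex_enum E j"
  have e: "?e \<in> E" "lex_rank E ?e = j"
    using lex_enum_mem[OF fin inj j] by simp_all
  have "{e' \<in> g ` E. bv_val e' < bv_val (g ?e)} = g ` {e' \<in> E. bv_val e' < bv_val ?e}"
    using mono_iff[OF _ e(1)] by auto
  then have "lex_rank (g ` E) (g ?e) = j"
    using e(2) inj_on_subset[OF inj_g] by (simp add: lex_rank_def card_image)
  then show ?thesis
    using lex_enum_eqI[OF _ inj_image] fin e(1) by simp
qed

lemma lex_enum_Cons_False:
  "E \<subseteq> vecs n \<Longrightarrow> j < card E \<Longrightarrow> lex_enum (Cons False ` E) j = False # lex_enum E j"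
  by (rule lex_enum_image[OF finite_subset_vecs inj_on_bv_val]) simp_all

lemma lex_enum_Un:
  assumes fin: "finite A" "finite B" and inj: "inj_on bv_val (A \<union> B)"
    and below: "\<And>a b. a \<in> A \<Longrightarrow> b \<in> B \<Longrightarrow> bv_val a < bv_val b"
    and j: "j < card A + card B"
  shows "lex_enum (A \<union> B) j = (if j < card A then lex_enum A j else lex_enum B (j - card A))"
proof (cases "j < card A")
  case True
  let ?e = "lex_enum A j"
  have e: "?e \<in> A" "lex_rank A ?e = j"
    using lex_enum_mem[OF fin(1) inj_on_subset[OF inj] True] by simp_all
  have "{e' \<in> A \<union> B. bv_val e' < bv_val ?e} = {e' \<in> A. bv_val e' < bv_val ?e}"
    using below[OF e(1)] by force
  then have "lex_rank (A \<union> B) ?e = j"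
    using e(2) by (simp add: lex_rank_def)
  with True e(1) show ?thesis
    using lex_enum_eqI[OF _ inj] fin by simp
next
  case False
  let ?e = "lex_enum B (j - card A)"
  have e: "?e \<in> B" "lex_rank B ?e = j - card A"
    using lex_enum_mem[OF fin(2) inj_on_subset[OF inj], of "j - card A"] j False by simp_all
  have "{e' \<in> A \<union> B. bv_val e' < bv_val ?e} = A \<union> {e' \<in> B. bv_val e' < bv_val ?e}"
    using below[OF _ e(1)] by force
  moreover have "A \<inter> {e' \<in> B. bv_val e' < bv_val ?e} = {}"
    using below by force
  ultimately have "lex_rank (A \<union> B) ?e = card A + (j - card A)"
    using e(2) fin by (simp add: lex_rank_def card_Un_disjoint)
  with False e(1) show ?thesis
    using lex_enum_eqI[OF _ inj] fin by simp
qed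

section \<open>Lexicographic enumeration of a subspace\<close>

lemma lin_subspace_tail:
  assumes L: "lin_subspace (Suc n) E"
  shows "lin_subspace n {a. False # a \<in> E}"
  unfolding lin_subspace_def
proof (intro conjI ballI)
  show "{a. False # a \<in> E} \<subseteq> vecs n"
    using L by (auto simp: lin_subspace_def vecs_def)
  show "zerov n \<in> {a. False # a \<in> E}"
    using L by (simp add: lin_subspace_def zerov_def)
  fix a b assume "a \<in> {a. False # a \<in> E}" "b \<in> {a. False # a \<in> E}"
  then have "vxor (False # a) (False # b) \<in> E"
    using L unfolding lin_subspace_def by blast
  then show "vxor a b \<in> {a. False # a \<in> E}"
    by simp
qed

lemma subset_vecs_Suc_split:
  "E \<subseteq> vecs (Suc n) \<Longrightarrow> E = Cons False ` {a. False # a \<in> E} \<union> Cons True ` {a. True # a \<in> E}"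
  by (auto simp: vecs_Suc)

lemma subspace_head_True_split:
  assumes L: "lin_subspace (Suc n) E" and t: "True # t \<in> E"
  shows "E = Cons False ` {a. False # a \<in> E} \<union> (\<lambda>a. True # vxor t a) ` {a. False # a \<in> E}"
proof -
  have closed: "\<And>a b. a \<in> E \<Longrightarrow> b \<in> E \<Longrightarrow> vxor a b \<in> E" and Esub: "E \<subseteq> vecs (Suc n)"
    using L by (auto simp: lin_subspace_def)
  have "{a. True # a \<in> E} = vxor t ` {a. False # a \<in> E}"
  proof (intro set_eqI iffI)
    fix a
    show "a \<in> vxor t ` {a. False # a \<in> E}" if "a \<in> {a. True # a \<in> E}"
    proof
      have "True # a \<in> vecs (Suc n)" "True # t \<in> vecs (Suc n)"
        using Esub t that by auto
      then have "length a = length t"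
        by (simp add: vecs_def)
      then show "a = vxor t (vxor t a)"
        by (simp add: vxor_cancel_left)
      show "vxor t a \<in> {a. False # a \<in> E}"
        using closed[OF t] that by force
    qed
    show "a \<in> {a. True # a \<in> E}" if "a \<in> vxor t ` {a. False # a \<in> E}"
      using closed[OF t] that by force
  qed
  then show ?thesis
    using subset_vecs_Suc_split[OF Esub] by (simp add: image_image)
qed

lemma card_subspace_head_True:
  assumes L: "lin_subspace (Suc n) E" and t: "True # t \<in> E"
  shows "card E = 2 * card {a. False # a \<in> E}"
proof -
  define E0 where "E0 = {a. False # a \<in> E}"
  have E0: "E0 \<subseteq> vecs n"
    using lin_subspace_tail[OF L] by (simp add: E0_def lin_subspace_def)
  have tv: "t \<in> vecs n"
    using L t by (auto simp: lin_subspace_def vecs_def)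
  have "card E = card (Cons False ` E0 \<union> (\<lambda>a. True # vxor t a) ` E0)"
    using subspace_head_True_split[OF L t] by (simp add: E0_def)
  also have "\<dots> = card (Cons False ` E0) + card ((\<lambda>a. True # vxor t a) ` E0)"
    using finite_subset_vecs[OF E0] by (intro card_Un_disjoint) auto
  also have "\<dots> = 2 * card E0"
    using inj_on_subset[OF inj_on_vxor[OF tv] E0] by (simp add: card_image inj_on_def)
  finally show ?thesis
    unfolding E0_def .
qed

text \<open>Translating a subspace by the lexicographically least element of the coset preserves
  the lexicographic order: at the first position where two elements differ, the translate
  has a zero, since otherwise it could be lowered by the difference.\<close>
lemma bv_val_vxor_strict_mono:
  assumes L: "lin_subspace n E" and t: "t \<in> vecs n"
    and t_min: "\<And>d. d \<in> E \<Longrightarrow> bv_val t \<le> bv_val (vxor t d)"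
    and a: "a \<in> E" and b: "b \<in> E" and ab: "bv_val a < bv_val b"
  shows "bv_val (vxor t a) < bv_val (vxor t b)"
proof -
  have la: "length a = n" and lb: "length b = n" and lt: "length t = n"
    using L a b t by (auto simp: lin_subspace_def vecs_def)
  obtain p where p: "p < n" "\<forall>i<p. a ! i = b ! i" "a ! p \<noteq> b ! p"
    using exists_first_diff[of a b] la lb ab by auto
  have bp: "b ! p"
    using bv_val_less_iff_first_diff[of a b p] p la lb ab by simp
  define d where "d = vxor a b"
  have "d \<in> E"
    using L a b by (simp add: lin_subspace_def d_def)
  have "\<not> t ! p"
  proof
    assume tp: "t ! p"
    have "bv_val (vxor t d) < bv_val t"
      using bv_val_less_iff_first_diff[of "vxor t d" t p] p bp la lb lt tp by (simp add: d_def nth_vxor)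
    then show False
      using t_min[OF \<open>d \<in> E\<close>] by simp
  qed
  then show ?thesis
    using bv_val_less_iff_first_diff[of "vxor t a" "vxor t b" p] p bp la lb lt by (simp add: nth_vxor)
qed

lemma lex_enum_head_split:
  assumes E0: "E0 \<subseteq> vecs n" and tv: "t \<in> vecs n"
    and translate_mono: "\<And>a a'. a \<in> E0 \<Longrightarrow> a' \<in> E0 \<Longrightarrow> bv_val a < bv_val a' \<Longrightarrow>
                                  bv_val (vxor t a) < bv_val (vxor t a')"
    and card: "card E0 = 2 ^ k" and y: "y \<in> vecs k"
  shows "lex_enum (Cons False ` E0 \<union> (\<lambda>a. True # vxor t a) ` E0) (bv_val (b # y)) =
    b # (if b then vxor t (lex_enum E0 (bv_val y)) else lex_enum E0 (bv_val y))"
proof -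
  define A where "A = Cons False ` E0"
  define B where "B = (\<lambda>a. True # vxor t a) ` E0"
  have fin0: "finite E0" and inj0: "inj_on bv_val E0"
    using finite_subset_vecs[OF E0] inj_on_bv_val[OF E0] by simp_all
  have AB: "A \<union> B \<subseteq> vecs (Suc n)"
    using E0 tv by (auto simp: A_def B_def vecs_def)
  have cardA: "card A = 2 ^ k" and cardB: "card B = 2 ^ k"
    using card inj_on_subset[OF inj_on_vxor[OF tv] E0]
    by (simp_all add: A_def B_def card_image inj_on_def)
  have below: "bv_val a < bv_val b'" if ab: "a \<in> A" "b' \<in> B" for a b'
  proof -
    obtain a0 b0 where "a = False # a0" "b' = True # vxor t b0" "a0 \<in> vecs n" "b0 \<in> vecs n"
      using ab E0 by (auto simp: A_def B_def)
    then show ?thesis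
      using bv_val_less[of a0] tv by (simp add: vecs_def)
  qed
  have j: "bv_val (b # y) = (if b then 2 ^ k else 0) + bv_val y" "bv_val y < card E0"
    using y bv_val_less card by (auto simp: vecs_def)
  have "lex_enum (A \<union> B) (bv_val (b # y)) = (if b then lex_enum B (bv_val y) else lex_enum A (bv_val y))"
    using lex_enum_Un[OF finite_subset_vecs[OF AB[THEN Un_subset_iff[THEN iffD1], THEN conjunct1]]
        finite_subset_vecs[OF AB[THEN Un_subset_iff[THEN iffD1], THEN conjunct2]]
        inj_on_bv_val[OF AB] below] j cardA cardB card
    by auto
  moreover have "lex_enum A (bv_val y) = False # lex_enum E0 (bv_val y)"
    unfolding A_def by (rule lex_enum_Cons_False[OF E0 j(2)])
  moreover have "lex_enum B (bv_val y) = True # vxor t (lex_enum E0 (bv_val y))"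
    unfolding B_def
  proof (rule lex_enum_image[OF fin0 inj0 _ j(2)])
    fix a a' assume aa': "a \<in> E0" "a' \<in> E0" "bv_val a < bv_val a'"
    then have "length a = length a'"
      using E0 by (auto simp: vecs_def)
    then show "bv_val (True # vxor t a) < bv_val (True # vxor t a')"
      using translate_mono[OF aa'] by simp
  qed
  ultimately show ?thesis
    unfolding A_def B_def by simp
qed

lemma lex_enum_subspace_head_True:
  assumes L: "lin_subspace (Suc n) E" and t: "True # t \<in> E"
    and t_min: "\<And>a. True # a \<in> E \<Longrightarrow> bv_val t \<le> bv_val a"
    and card: "card {a. False # a \<in> E} = 2 ^ k" and y: "y \<in> vecs k"
  shows "lex_enum E (bv_val (b # y)) =
    b # (if b then vxor t (lex_enum {a. False # a \<in> E} (bv_val y)) else lex_enum {a. False # a \<in> E} (bv_val y))"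
proof -
  have L0: "lin_subspace n {a. False # a \<in> E}"
    by (rule lin_subspace_tail[OF L])
  have tv: "t \<in> vecs n"
    using L t by (auto simp: lin_subspace_def vecs_def)
  have "True # vxor t d \<in> E" if "False # d \<in> E" for d
    using subspace_head_True_split[OF L t] that by blast
  then have "bv_val (vxor t a) < bv_val (vxor t a')"
    if "False # a \<in> E" "False # a' \<in> E" "bv_val a < bv_val a'" for a a'
    using bv_val_vxor_strict_mono[OF L0 tv _ _ _ that(3)] t_min that(1,2) by blast
  then show ?thesis
    using lex_enum_head_split[OF _ tv _ card y] L0 subspace_head_True_split[OF L t]
    by (simp add: lin_subspace_def)
qed

text \<open>The lexicographic enumeration of a subspace is a linear isomorphism GF(2)^k \<rightarrow> E;
  we only need the dual statement that linear functionals pull back to linear functionals.\<close>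
lemma lex_enum_subspace_dotp:
  assumes "lin_subspace n E" "card E = 2 ^ k" "x \<in> vecs n"
  shows "\<exists>w\<in>vecs k. \<forall>y\<in>vecs k. dotp x (lex_enum E (bv_val y)) = dotp w y"
  using assms
proof (induction n arbitrary: E k x)
  case 0
  then have "x = []"
    by (simp add: vecs_def)
  show ?case
  proof (intro bexI ballI)
    show "dotp x (lex_enum E (bv_val y)) = dotp (zerov k) y" for y
      using \<open>x = []\<close> dotp_commute[of "zerov k" y] by simp
  qed (simp add: vecs_def zerov_def)
next
  case (Suc n)
  define E0 where "E0 = {a. False # a \<in> E}"
  obtain c x' where x: "x = c # x'" "x' \<in> vecs n"
    using Suc.prems(3) by (cases x) (auto simp: vecs_def)
  have L0: "lin_subspace n E0"
    using lin_subspace_tail[OF Suc.prems(1)] by (simp add: E0_def)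
  have Esub: "E \<subseteq> vecs (Suc n)" and E0sub: "E0 \<subseteq> vecs n"
    using Suc.prems(1) L0 by (simp_all add: lin_subspace_def)
  show ?case
  proof (cases "\<exists>a. True # a \<in> E")
    case False
    then have E: "E = Cons False ` E0"
      using subset_vecs_Suc_split[OF Esub] by (simp add: E0_def)
    then have card0: "card E0 = 2 ^ k"
      using Suc.prems(2) by (simp add: card_image)
    obtain w where w: "w \<in> vecs k" "\<forall>y\<in>vecs k. dotp x' (lex_enum E0 (bv_val y)) = dotp w y"
      using Suc.IH[OF L0 card0 x(2)] by blast
    have "lex_enum E (bv_val y) = False # lex_enum E0 (bv_val y)" if "y \<in> vecs k" for y
      unfolding E using lex_enum_Cons_False[OF E0sub] bv_val_less[of y] that card0 by (simp add: vecs_def)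
    with w x show ?thesis
      by auto
  next
    case True
    then obtain t where t: "True # t \<in> E" and t_min: "\<And>a. True # a \<in> E \<Longrightarrow> bv_val t \<le> bv_val a"
      using ex_has_least_nat[of "\<lambda>a. True # a \<in> E" _ bv_val] by blast
    have tv: "t \<in> vecs n"
      using t Esub by (auto simp: vecs_def)
    obtain k' where k: "k = Suc k'" and card0: "card E0 = 2 ^ k'"
      using card_subspace_head_True[OF Suc.prems(1) t] Suc.prems(2) unfolding E0_def[symmetric]
      by (cases k) auto
    obtain w0 where w0: "w0 \<in> vecs k'" "\<forall>y\<in>vecs k'. dotp x' (lex_enum E0 (bv_val y)) = dotp w0 y"
      using Suc.IH[OF L0 card0 x(2)] by blast
    show ?thesis
    proof (intro bexI ballI)
      show "(c \<noteq> dotp x' t) # w0 \<in> vecs k"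
        using w0 k by (simp add: vecs_def)
      fix y assume "y \<in> vecs k"
      then obtain b y' where y: "y = b # y'" "y' \<in> vecs k'"
        using k by (cases y) (auto simp: vecs_def)
      have "lex_enum E0 (bv_val y') \<in> vecs n"
        using lex_enum_mem(1)[OF finite_subset_vecs[OF E0sub] inj_on_bv_val[OF E0sub]]
          bv_val_less[of y'] y card0 E0sub by (auto simp: vecs_def)
      \<comment> \<open>\<open>x \<cdot> (True # t \<oplus> e) = c + x' \<cdot> t + x' \<cdot> e\<close> gives the first coordinate of the witness\<close>
      then show "dotp x (lex_enum E (bv_val y)) = dotp ((c \<noteq> dotp x' t) # w0) y"
        using lex_enum_subspace_head_True[OF Suc.prems(1) t t_min card0[unfolded E0_def] y(2), of b]
          w0 x y tv by (auto simp: E0_def dotp_vxor vecs_def)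
    qed
  qed
qed

section \<open>Sums over cosets\<close>

lemma coset_subset_vecs: "lin_subspace n E \<Longrightarrow> v \<in> vecs n \<Longrightarrow> vxor v ` E \<subseteq> vecs n"
  by (auto simp: lin_subspace_def vecs_def)

lemma coset_mem_self: "lin_subspace n E \<Longrightarrow> v \<in> vecs n \<Longrightarrow> v \<in> vxor v ` E"
  unfolding lin_subspace_def by (rule image_eqI[of _ _ "zerov n"]) (simp_all add: vxor_zerov vecs_def)

lemma Xsum_coset_eq_walsh_transfer:
  assumes E: "subspace_dim n E k" and v: "v \<in> vecs n" and x: "x \<in> vecs n"
  shows "\<exists>w\<in>vecs k. Xsum (vxor v ` E) f x = sgn1 (dotp x v) * walsh k (coset_transfer v E f) w"
proof -
  have L: "lin_subspace n E" and card: "card E = 2 ^ k" and Esub: "E \<subseteq> vecs n"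
    using E by (auto simp: subspace_dim_def lin_subspace_def)
  obtain w where w: "w \<in> vecs k" "\<forall>y\<in>vecs k. dotp x (lex_enum E (bv_val y)) = dotp w y"
    using lex_enum_subspace_dotp[OF L card x] by blast
  have bij: "bij_betw (\<lambda>y. lex_enum E (bv_val y)) (vecs k) E"
    by (rule bij_betw_lex_enum[OF Esub card])
  have "Xsum (vxor v ` E) f x = (\<Sum>e\<in>E. sgn1 (f (vxor v e) \<noteq> dotp x (vxor v e)))"
    unfolding Xsum_def using inj_on_subset[OF inj_on_vxor[OF v] Esub] by (simp add: sum.reindex)
  also have "\<dots> = (\<Sum>y\<in>vecs k. sgn1 (f (vxor v (lex_enum E (bv_val y))) \<noteq>
                                      dotp x (vxor v (lex_enum E (bv_val y)))))"
    by (rule sum.reindex_bij_betw[OF bij, symmetric])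
  also have "\<dots> = (\<Sum>y\<in>vecs k. sgn1 (dotp x v) * sgn1 (coset_transfer v E f y \<noteq> dotp w y))"
  proof (rule sum.cong[OF refl])
    fix y assume y: "y \<in> vecs k"
    then have "length (lex_enum E (bv_val y)) = length v"
      using bij Esub v by (auto simp: bij_betw_def vecs_def)
    then show "sgn1 (f (vxor v (lex_enum E (bv_val y))) \<noteq> dotp x (vxor v (lex_enum E (bv_val y))))
        = sgn1 (dotp x v) * sgn1 (coset_transfer v E f y \<noteq> dotp w y)"
      using w(2) y by (simp add: dotp_vxor coset_transfer_def sgn1_def)
  qed
  also have "\<dots> = sgn1 (dotp x v) * walsh k (coset_transfer v E f) w"
    unfolding walsh_def by (simp add: sum_distrib_left)
  finally show ?thesis
    using w(1) by blast
qed

lemma abs_Xsum_coset_plateaued: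
  assumes "subspace_dim n E k" "v \<in> vecs n" "plateaued k s (coset_transfer v E f)"
    and "x \<in> vecs n" "Xsum (vxor v ` E) f x \<noteq> 0"
  shows "\<bar>real_of_int (Xsum (vxor v ` E) f x)\<bar> = 2 powr ((real k + real s) / 2)"
proof -
  obtain w where w: "w \<in> vecs k"
    and X: "Xsum (vxor v ` E) f x = sgn1 (dotp x v) * walsh k (coset_transfer v E f) w"
    using Xsum_coset_eq_walsh_transfer[OF assms(1,2,4)] by blast
  have "walsh k (coset_transfer v E f) w \<noteq> 0"
    using assms(5) X by auto
  then have "\<bar>real_of_int (walsh k (coset_transfer v E f) w)\<bar> = 2 powr ((real k + real s) / 2)"
    using assms(3) w unfolding plateaued_def by auto
  then show ?thesis
    unfolding X by (simp add: abs_mult sgn1_def)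
qed

lemma Xsum_eq_sum: "Xsum S f u = (\<Sum>w\<in>S. sgn1 (f w) * sgn1 (dotp u w))"
  unfolding Xsum_def by (intro sum.cong) (auto simp: sgn1_def)

lemma sum_vecs_if_mem:
  "S \<subseteq> vecs n \<Longrightarrow> (\<Sum>u\<in>vecs n. if u \<in> S then g u else 0) = sum g S"
  by (simp add: sum.inter_restrict[symmetric] Int_absorb1)

lemma Xsum_eq_sum_vecs:
  "S \<subseteq> vecs n \<Longrightarrow> Xsum S f u = (\<Sum>y\<in>vecs n. (if y \<in> S then sgn1 (f y) else 0) * sgn1 (dotp u y))"
  unfolding Xsum_eq_sum by (subst sum_vecs_if_mem[symmetric]) (auto intro: sum.cong)

lemma Xsum_not_identically_zero:
  assumes S: "S \<subseteq> vecs n" and v: "v \<in> S"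
  shows "\<exists>x\<in>vecs n. Xsum S f x \<noteq> 0"
proof (rule ccontr)
  assume "\<not> ?thesis"
  then have "0 = (\<Sum>x\<in>vecs n. Xsum S f x * sgn1 (dotp x v))"
    by simp
  also have "\<dots> = 2 ^ n * sgn1 (f v)"
    unfolding Xsum_eq_sum_vecs[OF S] using sum_sgn1_dotp_transform_twice S v by auto
  finally show False
    by (simp add: sgn1_def split: if_splits)
qed

lemma sum_piecewise_sgn1_dotp:
  assumes S1: "S1 \<subseteq> vecs n" and S2: "S2 \<subseteq> vecs n" and disj: "S1 \<inter> S2 = {}"
  shows "(\<Sum>u\<in>vecs n. (if u \<in> S1 then sgn1 (f1 u) * c1 else if u \<in> S2 then sgn1 (f2 u) * c2 else 0)
            * sgn1 (dotp u x))
         = c1 * Xsum S1 f1 x + c2 * Xsum S2 f2 x"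
proof -
  have "(\<Sum>u\<in>vecs n. (if u \<in> S1 then sgn1 (f1 u) * c1 else if u \<in> S2 then sgn1 (f2 u) * c2 else 0)
            * sgn1 (dotp u x))
      = (\<Sum>u\<in>vecs n. (if u \<in> S1 then c1 * (sgn1 (f1 u) * sgn1 (dotp x u)) else 0))
        + (\<Sum>u\<in>vecs n. (if u \<in> S2 then c2 * (sgn1 (f2 u) * sgn1 (dotp x u)) else 0))"
    unfolding sum.distrib[symmetric] using disj by (intro sum.cong refl) (auto simp: dotp_commute)
  also have "\<dots> = c1 * Xsum S1 f1 x + c2 * Xsum S2 f2 x"
    unfolding sum_vecs_if_mem[OF S1] sum_vecs_if_mem[OF S2] Xsum_eq_sum by (simp add: sum_distrib_left)
  finally show ?thesis .
qed

section \<open>The spectrum condition\<close>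

lemma walsh_spectrum_two_sets_iff:
  assumes S1: "S1 \<subseteq> vecs n" and S2: "S2 \<subseteq> vecs n" and disj: "S1 \<inter> S2 = {}"
  shows "(\<exists>f. \<forall>u\<in>vecs n. walsh n f u =
            (if u \<in> S1 then sgn1 (f1 u) * c1 else if u \<in> S2 then sgn1 (f2 u) * c2 else 0)) \<longleftrightarrow>
         (\<forall>x\<in>vecs n. \<bar>of_int c1 * of_int (Xsum S1 f1 x) + of_int c2 * of_int (Xsum S2 f2 x)\<bar>
                        = (2::real) ^ n)"
proof -
  have to_real: "\<bar>c1 * i + c2 * j\<bar> = 2 ^ n \<longleftrightarrow> \<bar>of_int c1 * of_int i + of_int c2 * of_int j\<bar> = (2::real) ^ n"
    for i j
    by (subst of_int_eq_iff[symmetric, where 'a = real]) simp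
  show ?thesis
    unfolding walsh_spectrum_iff sum_piecewise_sgn1_dotp[OF S1 S2 disj] to_real ..
qed

lemma abs_lincomb_complementary_supports_iff:
  fixes X1 X2 :: "'a \<Rightarrow> real"
  assumes supp: "\<And>x. x \<in> V \<Longrightarrow> X1 x = 0 \<longleftrightarrow> X2 x \<noteq> 0"
    and abs1: "\<And>x. x \<in> V \<Longrightarrow> X1 x \<noteq> 0 \<Longrightarrow> \<bar>X1 x\<bar> = c1"
    and abs2: "\<And>x. x \<in> V \<Longrightarrow> X2 x \<noteq> 0 \<Longrightarrow> \<bar>X2 x\<bar> = c2"
    and ex1: "x1 \<in> V" "X1 x1 \<noteq> 0" and ex2: "x2 \<in> V" "X2 x2 \<noteq> 0"
  shows "(\<forall>x\<in>V. \<bar>a1 * X1 x + a2 * X2 x\<bar> = m) \<longleftrightarrow> \<bar>a1\<bar> * c1 = m \<and> \<bar>a2\<bar> * c2 = m"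
proof
  assume const: "\<forall>x\<in>V. \<bar>a1 * X1 x + a2 * X2 x\<bar> = m"
  have "\<bar>a1 * X1 x1\<bar> = m" "\<bar>a2 * X2 x2\<bar> = m"
    using const ex1 ex2 supp[OF ex1(1)] supp[OF ex2(1)] by auto
  then show "\<bar>a1\<bar> * c1 = m \<and> \<bar>a2\<bar> * c2 = m"
    using abs1[OF ex1] abs2[OF ex2] by (simp add: abs_mult)
next
  assume m: "\<bar>a1\<bar> * c1 = m \<and> \<bar>a2\<bar> * c2 = m"
  show "\<forall>x\<in>V. \<bar>a1 * X1 x + a2 * X2 x\<bar> = m"
  proof
    fix x assume x: "x \<in> V"
    show "\<bar>a1 * X1 x + a2 * X2 x\<bar> = m"
    proof (cases "X1 x = 0")
      case True
      then show ?thesis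
        using m supp[OF x] abs2[OF x] by (simp add: abs_mult)
    next
      case False
      then show ?thesis
        using m supp[OF x] abs1[OF x] by (simp add: abs_mult)
    qed
  qed
qed

lemma pow2_mult_powr_half_eq_iff:
  "(2::real) ^ a * 2 powr ((real b + real d) / 2) = 2 ^ c \<longleftrightarrow> 2 * a + b + d = 2 * c"
proof -
  have "(2::real) ^ a * 2 powr ((real b + real d) / 2) = 2 powr (real a + (real b + real d) / 2)"
    by (simp add: powr_add powr_realpow)
  moreover have "(2::real) ^ c = 2 powr real c"
    by (simp add: powr_realpow)
  ultimately show ?thesis
    by (simp add: powr_inj field_simps) linarith
qed

theorem mainTheorem3:
  fixes n l1 l2 s1 s2 :: nat
    and E1 E2 :: "bool list set"
    and v1 v2 :: "bool list"
    and f1 f2 :: "bool list \<Rightarrow> bool"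
  assumes n_even: "even n"
    and E1: "subspace_dim n E1 l1"
    and E2: "subspace_dim n E2 l2"
    and v1: "v1 \<in> vecs n"
    and v2: "v2 \<in> vecs n"
    and disj: "(vxor v1 ` E1) \<inter> (vxor v2 ` E2) = {}"
    and card_lt: "(2::nat) ^ l1 + 2 ^ l2 < 2 ^ n"
    and plat1: "plateaued l1 s1 (coset_transfer v1 E1 f1)"
    and plat2: "plateaued l2 s2 (coset_transfer v2 E2 f2)"
    and tds: "totally_disjoint_spectra n (vxor v1 ` E1) f1 (vxor v2 ` E2) f2"
  shows "(\<exists>f :: bool list \<Rightarrow> bool. \<forall>u\<in>vecs n.
            walsh n f u =
              (if u \<in> vxor v1 ` E1 then sgn1 (f1 u) * 2 ^ ((n + 2) div 2)
               else if u \<in> vxor v2 ` E2 then sgn1 (f2 u) * 2 ^ (n div 2)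
               else 0))
         \<longleftrightarrow> (l1 + s1 + 2 = n \<and> l2 + s2 = n)"
proof -
  define X1 where "X1 x = real_of_int (Xsum (vxor v1 ` E1) f1 x)" for x
  define X2 where "X2 x = real_of_int (Xsum (vxor v2 ` E2) f2 x)" for x
  have L1: "lin_subspace n E1" and L2: "lin_subspace n E2"
    using E1 E2 by (simp_all add: subspace_dim_def)
  note S1 = coset_subset_vecs[OF L1 v1] and S2 = coset_subset_vecs[OF L2 v2]
  obtain x1 x2 where x1: "x1 \<in> vecs n" "X1 x1 \<noteq> 0" and x2: "x2 \<in> vecs n" "X2 x2 \<noteq> 0"
    using Xsum_not_identically_zero[OF S1 coset_mem_self[OF L1 v1]]
      Xsum_not_identically_zero[OF S2 coset_mem_self[OF L2 v2]]
    unfolding X1_def X2_def of_int_eq_0_iff by blast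
  have "(\<exists>f. \<forall>u\<in>vecs n. walsh n f u = (if u \<in> vxor v1 ` E1 then sgn1 (f1 u) * 2 ^ ((n + 2) div 2)
          else if u \<in> vxor v2 ` E2 then sgn1 (f2 u) * 2 ^ (n div 2) else 0))
      \<longleftrightarrow> (\<forall>x\<in>vecs n. \<bar>2 ^ ((n + 2) div 2) * X1 x + 2 ^ (n div 2) * X2 x\<bar> = 2 ^ n)"
    unfolding walsh_spectrum_two_sets_iff[OF S1 S2 disj] X1_def X2_def by simp
  also have "\<dots> \<longleftrightarrow> \<bar>2 ^ ((n + 2) div 2)\<bar> * 2 powr ((real l1 + real s1) / 2) = 2 ^ n
                  \<and> \<bar>2 ^ (n div 2)\<bar> * 2 powr ((real l2 + real s2) / 2) = (2::real) ^ n"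
  proof (rule abs_lincomb_complementary_supports_iff)
    show "X1 x = 0 \<longleftrightarrow> X2 x \<noteq> 0" if "x \<in> vecs n" for x
      using tds that unfolding totally_disjoint_spectra_def X1_def X2_def by fastforce
    show "\<bar>X1 x\<bar> = 2 powr ((real l1 + real s1) / 2)" if "x \<in> vecs n" "X1 x \<noteq> 0" for x
      using abs_Xsum_coset_plateaued[OF E1 v1 plat1] that unfolding X1_def by simp
    show "\<bar>X2 x\<bar> = 2 powr ((real l2 + real s2) / 2)" if "x \<in> vecs n" "X2 x \<noteq> 0" for x
      using abs_Xsum_coset_plateaued[OF E2 v2 plat2] that unfolding X2_def by simp
  qed (fact x1 x2)+
  also have "\<dots> \<longleftrightarrow> l1 + s1 + 2 = n \<and> l2 + s2 = n"
    using n_even unfolding power_abs abs_numeral pow2_mult_powr_half_eq_iff by auto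
  finally show ?thesis .
qed

end
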